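(* Let $\kappa=k_1k_2\cdots k_s$ where $k_1\le\cdots\le k_s$ are primes, and $\mathbb Z^\kappa=\mathbb Z_{k_1}\times\cdots\times\mathbb Z_{k_s}$. Consider the linear control network $\Sigma$ over $\mathbb Z^\kappa$: $Z(t+1)=AZ(t)+BU(t)$, $Y(t)=CZ(t)$, with $Z(t)\in(\mathbb Z^\kappa)^n$, $U(t)\in(\mathbb Z^\kappa)^m$, $Y(t)\in(\mathbb Z^\kappa)^p$, $A\in(\mathbb Z^\kappa)^{n\times n}$, $B\in(\mathbb Z^\kappa)^{n\times m}$, $C\in(\mathbb Z^\kappa)^{p\times n}$, all operations in $\mathbb Z^\kappa$. For $i\in[1,s]$ let $\Sigma_i$ be the linear control network over $\mathbb Z_{k_i}$: $X^i(t+1)=A^iX^i(t)+B^iU^i(t)$, $Y^i(t)=C^iX^i(t)$, where $A^i=\phi_i(A)$, $B^i=\phi_i(B)$, $C^i=\phi_i(C)$ (entrywise projections). Then $\Sigma=\Sigma_1\times\Sigma_2\times\cdots\times\Sigma_s$, and $\Sigma$ is controllable (respectively observable) if and only if every $\Sigma_i$, $i\in[1,s]$, is controllable (respectively observable).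
   Context: $\mathbb Z_p$ is the ring of integers modulo $p$; $\mathbb Z^\kappa$ has componentwise operations, and $\phi_i:\mathbb Z^\kappa\to\mathbb Z_{k_i}$ is the $i$-th coordinate projection. $\Sigma=\Sigma_1\times\cdots\times\Sigma_s$ means: for every initial state and control sequence of $\Sigma$, the $i$-th coordinate of the trajectory of $\Sigma$ equals the trajectory of $\Sigma_i$ started at the $i$-th coordinate of the initial state and driven by the $i$-th coordinates of the controls. Controllable means: for any initial state $z_0$ and target $z_d$ there exist $T\ge0$ and a control sequence steering $z_0$ to $z_d$ at time $T$. Observable means: any two distinct initial states can be distinguished by the outputs under some control sequence. *)

theory Defs
  imports "HOL-Computational_Algebra.Primes"
begin

record 'a rng =
  car :: "'a set"
  ad  :: "'a \<Rightarrow> 'a \<Rightarrow> 'a"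
  mu  :: "'a \<Rightarrow> 'a \<Rightarrow> 'a"
  ze  :: 'a

definition Zmod :: "nat \<Rightarrow> int rng" where
  "Zmod q = \<lparr> car = {0..<int q}, ad = (\<lambda>a b. (a + b) mod int q),
             mu = (\<lambda>a b. (a * b) mod int q), ze = 0 \<rparr>"

text \<open>The ring Z^kappa = Z_{k_1} x ... x Z_{k_s}, ks = [k_1,...,k_s]; elements are functions
  on the index set {0..<s} (component i is the (i+1)-th coordinate), extended by 0.\<close>
definition Zprod :: "nat list \<Rightarrow> (nat \<Rightarrow> int) rng" where
  "Zprod ks = \<lparr> car = {z. (\<forall>i<length ks. 0 \<le> z i \<and> z i < int (ks ! i)) \<and> (\<forall>i\<ge>length ks. z i = 0)},
     ad = (\<lambda>a b i. if i < length ks then (a i + b i) mod int (ks ! i) else 0),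
     mu = (\<lambda>a b i. if i < length ks then (a i * b i) mod int (ks ! i) else 0),
     ze = (\<lambda>i. 0) \<rparr>"

definition proj :: "nat \<Rightarrow> (nat \<Rightarrow> int) \<Rightarrow> int" where
  "proj i z = z i"

definition proj_vec :: "nat \<Rightarrow> (nat \<Rightarrow> int) list \<Rightarrow> int list" where
  "proj_vec i v = map (proj i) v"

definition proj_mat :: "nat \<Rightarrow> (nat \<Rightarrow> int) list list \<Rightarrow> int list list" where
  "proj_mat i M = map (proj_vec i) M"

text \<open>Vectors are lists, matrices are lists of rows.\<close>
definition vecs :: "'a rng \<Rightarrow> nat \<Rightarrow> 'a list set" where
  "vecs R k = {v. length v = k \<and> set v \<subseteq> car R}"

definition is_mat :: "'a rng \<Rightarrow> nat \<Rightarrow> nat \<Rightarrow> 'a list list \<Rightarrow> bool" where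
  "is_mat R r c M \<longleftrightarrow> length M = r \<and> (\<forall>row\<in>set M. row \<in> vecs R c)"

definition mat_vec :: "'a rng \<Rightarrow> 'a list list \<Rightarrow> 'a list \<Rightarrow> 'a list" where
  "mat_vec R M v = map (\<lambda>row. foldr (ad R) (map2 (mu R) row v) (ze R)) M"

definition vec_add :: "'a rng \<Rightarrow> 'a list \<Rightarrow> 'a list \<Rightarrow> 'a list" where
  "vec_add R u v = map2 (ad R) u v"

fun traj :: "'a rng \<Rightarrow> 'a list list \<Rightarrow> 'a list list \<Rightarrow> 'a list \<Rightarrow> (nat \<Rightarrow> 'a list) \<Rightarrow> nat \<Rightarrow> 'a list" where
  "traj R A B x0 us 0 = x0"
| "traj R A B x0 us (Suc t) = vec_add R (mat_vec R A (traj R A B x0 us t)) (mat_vec R B (us t))"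

definition net_output :: "'a rng \<Rightarrow> 'a list list \<Rightarrow> 'a list list \<Rightarrow> 'a list list \<Rightarrow> 'a list \<Rightarrow> (nat \<Rightarrow> 'a list) \<Rightarrow> nat \<Rightarrow> 'a list" where
  "net_output R A B C x0 us t = mat_vec R C (traj R A B x0 us t)"

definition controls :: "'a rng \<Rightarrow> nat \<Rightarrow> (nat \<Rightarrow> 'a list) set" where
  "controls R m = {us. \<forall>t. us t \<in> vecs R m}"

definition controllable :: "'a rng \<Rightarrow> nat \<Rightarrow> nat \<Rightarrow> 'a list list \<Rightarrow> 'a list list \<Rightarrow> bool" where
  "controllable R n m A B \<longleftrightarrow>
     (\<forall>z0\<in>vecs R n. \<forall>zd\<in>vecs R n. \<exists>T. \<exists>us\<in>controls R m. traj R A B z0 us T = zd)"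

definition observable :: "'a rng \<Rightarrow> nat \<Rightarrow> nat \<Rightarrow> 'a list list \<Rightarrow> 'a list list \<Rightarrow> 'a list list \<Rightarrow> bool" where
  "observable R n m A B C \<longleftrightarrow>
     (\<forall>x0\<in>vecs R n. \<forall>x1\<in>vecs R n. x0 \<noteq> x1 \<longrightarrow>
        (\<exists>us\<in>controls R m. \<exists>t. net_output R A B C x0 us t \<noteq> net_output R A B C x1 us t))"

text \<open>Sigma = Sigma_1 x ... x Sigma_s (trajectory-wise, as in the paper's definition).\<close>
definition is_product :: "nat list \<Rightarrow> nat \<Rightarrow> nat \<Rightarrow> (nat \<Rightarrow> int) list list \<Rightarrow> (nat \<Rightarrow> int) list list \<Rightarrow> bool" where
  "is_product ks n m A B \<longleftrightarrow>
     (\<forall>z0\<in>vecs (Zprod ks) n. \<forall>us\<in>controls (Zprod ks) m. \<forall>t. \<forall>i<length ks.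
        proj_vec i (traj (Zprod ks) A B z0 us t)
        = traj (Zmod (ks ! i)) (proj_mat i A) (proj_mat i B) (proj_vec i z0) (\<lambda>t. proj_vec i (us t)) t)"

end

theory Submission
  imports Defs
begin

text \<open>Arithmetic in \<open>\<int>\<^sup>\<kappa>\<close> is componentwise, so each projection \<open>\<phi>\<^sub>i\<close> is a ring
  homomorphism onto \<open>\<int>\<^sub>k\<^sub>i\<close> and commutes with the update and output maps: trajectories
  of \<open>\<Sigma>\<close> project to those of \<open>\<Sigma>\<^sub>i\<close>, and a vector over \<open>\<int>\<^sup>\<kappa>\<close> is determined by its
  projections. States and controls of \<open>\<Sigma>\<^sub>i\<close> embed into \<open>\<Sigma>\<close> with zeros in the other
  components, which transfers both properties from \<open>\<Sigma>\<close> to \<open>\<Sigma>\<^sub>i\<close>, and observability back.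
  For controllability of \<open>\<Sigma>\<close> the components must be steered in a common time. This works
  because a controllable system over a finite ring reaches any target at every sufficiently
  large time: steer to the zero state, wait there under zero control, then steer out.\<close>

definition rng_hom :: "('a \<Rightarrow> 'b) \<Rightarrow> 'a rng \<Rightarrow> 'b rng \<Rightarrow> bool" where
  "rng_hom h R S \<longleftrightarrow>
     (\<forall>a b. h (ad R a b) = ad S (h a) (h b)) \<and> (\<forall>a b. h (mu R a b) = mu S (h a) (h b)) \<and> h (ze R) = ze S"

lemma mat_vec_hom:
  assumes "rng_hom h R S"
  shows "map h (mat_vec R M v) = mat_vec S (map (map h) M) (map h v)"
proof -
  have "h (foldr (ad R) xs (ze R)) = foldr (ad S) (map h xs) (ze S)" for xs
    using assms by (induction xs) (simp_all add: rng_hom_def)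
  moreover have "map h (map2 (mu R) xs ys) = map2 (mu S) (map h xs) (map h ys)" for xs ys
    using assms by (simp add: rng_hom_def zip_map_map case_prod_beta)
  ultimately show ?thesis
    by (simp add: mat_vec_def)
qed

lemma vec_add_hom:
  assumes "rng_hom h R S"
  shows "map h (vec_add R u v) = vec_add S (map h u) (map h v)"
  using assms by (simp add: vec_add_def rng_hom_def zip_map_map case_prod_beta)

lemma traj_hom:
  assumes "rng_hom h R S"
  shows "map h (traj R A B x us t)
    = traj S (map (map h) A) (map (map h) B) (map h x) (\<lambda>t. map h (us t)) t"
  by (induction t) (simp_all add: mat_vec_hom[OF assms] vec_add_hom[OF assms])

lemma net_output_hom:
  assumes "rng_hom h R S"
  shows "map h (net_output R A B C x us t)
    = net_output S (map (map h) A) (map (map h) B) (map (map h) C) (map h x) (\<lambda>t. map h (us t)) t"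
  by (simp add: net_output_def mat_vec_hom[OF assms] traj_hom[OF assms])

lemma traj_cong: "(\<And>t. t < T \<Longrightarrow> us t = vs t) \<Longrightarrow> traj R A B x us T = traj R A B x vs T"
  by (induction T) simp_all

lemma traj_append:
  "traj R A B x (\<lambda>t. if t < a then us t else vs (t - a)) (a + b) = traj R A B (traj R A B x us a) vs b"
proof (induction b)
  case 0
  show ?case by (simp, rule traj_cong) simp
qed simp

lemma mat_vec_in_vecs:
  assumes "\<forall>a b. ad R a b \<in> car R" and "ze R \<in> car R"
  shows "mat_vec R M v \<in> vecs R (length M)"
proof -
  have "foldr (ad R) xs (ze R) \<in> car R" for xs
    using assms by (cases xs) simp_all
  then show ?thesis
    by (auto simp: mat_vec_def vecs_def)
qed

lemma traj_in_vecs: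
  assumes "\<forall>a b. ad R a b \<in> car R" and "x \<in> vecs R n" and "length A = n" and "length B = n"
  shows "traj R A B x us t \<in> vecs R n"
proof (cases t)
  case (Suc t')
  then show ?thesis
    using assms by (auto simp: vecs_def vec_add_def mat_vec_def dest!: set_zip_leftD)
qed (simp add: assms)

lemma finite_vecs:
  assumes "finite (car R)"
  shows "finite (vecs R n)"
proof -
  have "vecs R n = {xs. set xs \<subseteq> car R \<and> length xs = n}"
    by (auto simp: vecs_def)
  then show ?thesis
    using assms by (simp add: finite_lists_length_eq)
qed

definition controllable_in_time ::
    "'a rng \<Rightarrow> nat \<Rightarrow> nat \<Rightarrow> 'a list list \<Rightarrow> 'a list list \<Rightarrow> nat \<Rightarrow> bool" where
  "controllable_in_time R n m A B T \<longleftrightarrow>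
     (\<forall>z0\<in>vecs R n. \<forall>zd\<in>vecs R n. \<exists>us\<in>controls R m. traj R A B z0 us T = zd)"

lemma controllable_if_in_time: "controllable_in_time R n m A B T \<Longrightarrow> controllable R n m A B"
  unfolding controllable_in_time_def controllable_def by blast

lemma traj_through_rest_state:
  assumes rest: "\<And>t. traj R A B z (\<lambda>_. c) t = z" and c: "c \<in> vecs R m"
    and u: "u \<in> controls R m" "traj R A B x u a = z"
    and v: "v \<in> controls R m" "traj R A B z v b = y"
    and "a + b \<le> T"
  shows "\<exists>w\<in>controls R m. traj R A B x w T = y"
proof -
  define d where "d = T - a - b"
  define wait_then_v where "wait_then_v = (\<lambda>t. if t < d then c else v (t - d))"
  define w where "w = (\<lambda>t. if t < a then u t else wait_then_v (t - a))"
  have "T = a + (d + b)"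
    using \<open>a + b \<le> T\<close> by (simp add: d_def)
  then have "traj R A B x w T = traj R A B (traj R A B x u a) wait_then_v (d + b)"
    unfolding w_def by (simp only: traj_append)
  also have "\<dots> = traj R A B (traj R A B z (\<lambda>_. c) d) v b"
    unfolding wait_then_v_def u(2) by (rule traj_append)
  also have "\<dots> = y"
    by (simp add: rest v(2))
  finally have "traj R A B x w T = y" .
  moreover have "w \<in> controls R m"
    using c u(1) v(1) by (simp add: controls_def w_def wait_then_v_def)
  ultimately show ?thesis by blast
qed

lemma controllable_eventually_in_time:
  assumes ctrl: "controllable R n m A B" and fin: "finite (vecs R n)"
    and z: "z \<in> vecs R n" and c: "c \<in> vecs R m" and rest: "\<And>t. traj R A B z (\<lambda>_. c) t = z"
  shows "\<exists>K. \<forall>T\<ge>K. controllable_in_time R n m A B T"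
proof -
  let ?V = "vecs R n"
  have "\<forall>x\<in>?V. \<exists>a. \<exists>u\<in>controls R m. traj R A B x u a = z"
    using ctrl z unfolding controllable_def by blast
  then obtain a u where to_rest: "\<forall>x\<in>?V. u x \<in> controls R m \<and> traj R A B x (u x) (a x) = z"
    by metis
  have "\<forall>y\<in>?V. \<exists>b. \<exists>v\<in>controls R m. traj R A B z v b = y"
    using ctrl z unfolding controllable_def by blast
  then obtain b v where from_rest: "\<forall>y\<in>?V. v y \<in> controls R m \<and> traj R A B z (v y) (b y) = y"
    by metis
  have "controllable_in_time R n m A B T" if T: "Max (a ` ?V) + Max (b ` ?V) \<le> T" for T
    unfolding controllable_in_time_def
  proof (intro ballI)
    fix x y assume x: "x \<in> ?V" and y: "y \<in> ?V"
    have "a x + b y \<le> T"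
      using T fin x y by (meson Max_ge add_mono finite_imageI image_eqI order_trans)
    then show "\<exists>w\<in>controls R m. traj R A B x w T = y"
      using to_rest from_rest x y
      by (intro traj_through_rest_state[OF rest c, where u = "u x" and v = "v y"]) auto
  qed
  then show ?thesis by blast
qed

lemma zero_in_vecs_Zmod: "0 < q \<Longrightarrow> replicate k 0 \<in> vecs (Zmod q) k"
  by (auto simp: vecs_def Zmod_def)

lemma mat_vec_Zmod_zero: "mat_vec (Zmod q) M (replicate k 0) = replicate (length M) 0"
proof -
  have "foldr (ad (Zmod q)) (map2 (mu (Zmod q)) row (replicate k 0)) 0 = 0" for row
  proof (induction row arbitrary: k)
    case (Cons a row)
    then show ?case by (cases k) (simp_all add: Zmod_def)
  qed simp
  moreover have "ze (Zmod q) = 0"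
    by (simp add: Zmod_def)
  ultimately show ?thesis
    by (simp add: mat_vec_def map_replicate_const)
qed

lemma traj_Zmod_zero:
  "length A = n \<Longrightarrow> length B = n \<Longrightarrow>
   traj (Zmod q) A B (replicate n 0) (\<lambda>_. replicate m 0) t = replicate n 0"
  by (induction t) (simp_all add: mat_vec_Zmod_zero vec_add_def, simp add: Zmod_def)

lemma Zmod_controllable_eventually_in_time:
  assumes "controllable (Zmod q) n m A B" and "length A = n" and "length B = n" and "0 < q"
  shows "\<exists>K. \<forall>T\<ge>K. controllable_in_time (Zmod q) n m A B T"
proof -
  have "finite (vecs (Zmod q) n)"
    by (rule finite_vecs) (simp add: Zmod_def)
  then show ?thesis
    using assms
    by (intro controllable_eventually_in_time[where z = "replicate n 0" and c = "replicate m 0"])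
       (simp_all add: zero_in_vecs_Zmod traj_Zmod_zero)
qed

lemma proj_vec_eq_map: "proj_vec i = map (proj i)"
  by (simp add: fun_eq_iff proj_vec_def)

lemma rng_hom_proj: "i < length ks \<Longrightarrow> rng_hom (proj i) (Zprod ks) (Zmod (ks ! i))"
  by (simp add: rng_hom_def proj_def Zprod_def Zmod_def)

lemma traj_proj:
  "i < length ks \<Longrightarrow> proj_vec i (traj (Zprod ks) A B x us t)
     = traj (Zmod (ks ! i)) (proj_mat i A) (proj_mat i B) (proj_vec i x) (\<lambda>t. proj_vec i (us t)) t"
  by (simp add: proj_mat_def proj_vec_eq_map traj_hom[OF rng_hom_proj])

lemma net_output_proj:
  "i < length ks \<Longrightarrow> proj_vec i (net_output (Zprod ks) A B C x us t)
     = net_output (Zmod (ks ! i)) (proj_mat i A) (proj_mat i B) (proj_mat i C) (proj_vec i x)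
         (\<lambda>t. proj_vec i (us t)) t"
  by (simp add: proj_mat_def proj_vec_eq_map net_output_hom[OF rng_hom_proj])

lemma is_product_Zprod: "is_product ks n m A B"
  by (simp add: is_product_def traj_proj)

lemma Zprod_ad_in_car:
  assumes "\<forall>k\<in>set ks. 0 < k"
  shows "ad (Zprod ks) a b \<in> car (Zprod ks)"
  using assms unfolding Zprod_def by simp

lemma Zprod_ze_in_car:
  assumes "\<forall>k\<in>set ks. 0 < k"
  shows "ze (Zprod ks) \<in> car (Zprod ks)"
  using assms unfolding Zprod_def by simp

lemma Zprod_vecs_eqI:
  assumes v: "v \<in> vecs (Zprod ks) k" and w: "w \<in> vecs (Zprod ks) k"
    and proj_eq: "\<And>i. i < length ks \<Longrightarrow> proj_vec i v = proj_vec i w"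
  shows "v = w"
proof (rule nth_equalityI)
  show "length v = length w"
    using v w by (simp add: vecs_def)
  fix j assume "j < length v"
  then have j: "j < length v" "j < length w"
    and car: "v ! j \<in> car (Zprod ks)" "w ! j \<in> car (Zprod ks)"
    using v w by (auto simp: vecs_def)
  show "v ! j = w ! j"
  proof
    fix i
    show "(v ! j) i = (w ! j) i"
    proof (cases "i < length ks")
      case True
      then show ?thesis
        using proj_eq j by (metis nth_map proj_def proj_vec_def)
    next
      case False
      then show ?thesis
        using car by (simp add: Zprod_def)
    qed
  qed
qed

lemma proj_vec_in_vecs:
  "i < length ks \<Longrightarrow> v \<in> vecs (Zprod ks) k \<Longrightarrow> proj_vec i v \<in> vecs (Zmod (ks ! i)) k"
  by (auto simp: vecs_def Zmod_def Zprod_def proj_vec_def proj_def)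

lemma proj_controls:
  "i < length ks \<Longrightarrow> us \<in> controls (Zprod ks) k \<Longrightarrow> (\<lambda>t. proj_vec i (us t)) \<in> controls (Zmod (ks ! i)) k"
  by (simp add: controls_def proj_vec_in_vecs)

definition glue_vec :: "nat list \<Rightarrow> nat \<Rightarrow> (nat \<Rightarrow> int list) \<Rightarrow> (nat \<Rightarrow> int) list" where
  "glue_vec ks k vs = map (\<lambda>j i. if i < length ks then vs i ! j else 0) [0..<k]"

lemma glue_vec_in_vecs:
  assumes "\<And>i. i < length ks \<Longrightarrow> vs i \<in> vecs (Zmod (ks ! i)) k"
  shows "glue_vec ks k vs \<in> vecs (Zprod ks) k"
proof -
  have "vs i ! j \<in> {0..<int (ks ! i)}" if "i < length ks" "j < k" for i j
  proof -
    have "set (vs i) \<subseteq> {0..<int (ks ! i)}" "length (vs i) = k"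
      using assms[OF that(1)] by (simp_all add: vecs_def Zmod_def)
    then show ?thesis
      using that(2) by (metis nth_mem subsetD)
  qed
  then show ?thesis
    by (auto simp: glue_vec_def vecs_def Zprod_def)
qed

lemma proj_glue_vec: "i < length ks \<Longrightarrow> length (vs i) = k \<Longrightarrow> proj_vec i (glue_vec ks k vs) = vs i"
  using map_nth[of "vs i"] by (simp add: glue_vec_def proj_vec_def proj_def comp_def)

definition embed_vec :: "nat list \<Rightarrow> nat \<Rightarrow> int list \<Rightarrow> (nat \<Rightarrow> int) list" where
  "embed_vec ks i v = glue_vec ks (length v) (\<lambda>j. if j = i then v else replicate (length v) 0)"

lemma embed_vec_in_vecs:
  assumes pos: "\<forall>k\<in>set ks. 0 < k" and v: "v \<in> vecs (Zmod (ks ! i)) k"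
  shows "embed_vec ks i v \<in> vecs (Zprod ks) k"
proof -
  have "length v = k"
    using v by (simp add: vecs_def)
  then show ?thesis
    unfolding embed_vec_def \<open>length v = k\<close>
    using pos v by (intro glue_vec_in_vecs) (simp add: zero_in_vecs_Zmod)
qed

lemma proj_embed_vec:
  "j < length ks \<Longrightarrow> proj_vec j (embed_vec ks i v) = (if j = i then v else replicate (length v) 0)"
  by (simp add: embed_vec_def proj_glue_vec)

lemma embed_controls:
  "\<forall>k\<in>set ks. 0 < k \<Longrightarrow> us \<in> controls (Zmod (ks ! i)) k
    \<Longrightarrow> (\<lambda>t. embed_vec ks i (us t)) \<in> controls (Zprod ks) k"
  by (simp add: controls_def embed_vec_in_vecs)

lemma controllable_component_if_Zprod:
  assumes pos: "\<forall>k\<in>set ks. 0 < k" and i: "i < length ks"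
    and ctrl: "controllable (Zprod ks) n m A B"
  shows "controllable (Zmod (ks ! i)) n m (proj_mat i A) (proj_mat i B)"
  unfolding controllable_def
proof (intro ballI)
  fix z0 zd assume z0: "z0 \<in> vecs (Zmod (ks ! i)) n" and zd: "zd \<in> vecs (Zmod (ks ! i)) n"
  obtain T us where us: "us \<in> controls (Zprod ks) m"
    and reach: "traj (Zprod ks) A B (embed_vec ks i z0) us T = embed_vec ks i zd"
    using ctrl embed_vec_in_vecs[OF pos z0] embed_vec_in_vecs[OF pos zd]
    unfolding controllable_def by blast
  have "traj (Zmod (ks ! i)) (proj_mat i A) (proj_mat i B) z0 (\<lambda>t. proj_vec i (us t)) T = zd"
    using traj_proj[OF i, of A B "embed_vec ks i z0" us T] reach by (simp add: proj_embed_vec i)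
  then show "\<exists>T. \<exists>us\<in>controls (Zmod (ks ! i)) m.
      traj (Zmod (ks ! i)) (proj_mat i A) (proj_mat i B) z0 us T = zd"
    using proj_controls[OF i us] by blast
qed

lemma controllable_in_time_Zprod:
  assumes pos: "\<forall>k\<in>set ks. 0 < k" and "length A = n" and "length B = n"
    and components: "\<And>i. i < length ks \<Longrightarrow>
      controllable_in_time (Zmod (ks ! i)) n m (proj_mat i A) (proj_mat i B) T"
  shows "controllable_in_time (Zprod ks) n m A B T"
  unfolding controllable_in_time_def
proof (intro ballI)
  fix z0 zd assume z0: "z0 \<in> vecs (Zprod ks) n" and zd: "zd \<in> vecs (Zprod ks) n"
  have "\<forall>i<length ks. \<exists>u\<in>controls (Zmod (ks ! i)) m.
      traj (Zmod (ks ! i)) (proj_mat i A) (proj_mat i B) (proj_vec i z0) u T = proj_vec i zd"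
    using components proj_vec_in_vecs z0 zd unfolding controllable_in_time_def by blast
  then obtain u where u: "\<And>i. i < length ks \<Longrightarrow> u i \<in> controls (Zmod (ks ! i)) m"
    and reach: "\<And>i. i < length ks \<Longrightarrow>
      traj (Zmod (ks ! i)) (proj_mat i A) (proj_mat i B) (proj_vec i z0) (u i) T = proj_vec i zd"
    by metis
  define us where "us t = glue_vec ks m (\<lambda>i. u i t)" for t
  have us: "us \<in> controls (Zprod ks) m"
    using u by (auto simp: us_def controls_def intro: glue_vec_in_vecs)
  have proj_us: "(\<lambda>t. proj_vec i (us t)) = u i" if "i < length ks" for i
    using u[OF that] that by (auto simp: us_def controls_def vecs_def proj_glue_vec)
  have "traj (Zprod ks) A B z0 us T = zd"
  proof (rule Zprod_vecs_eqI)
    show "traj (Zprod ks) A B z0 us T \<in> vecs (Zprod ks) n"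
      using Zprod_ad_in_car[OF pos] z0 assms(2,3) by (intro traj_in_vecs) auto
    show "zd \<in> vecs (Zprod ks) n" by fact
    show "proj_vec i (traj (Zprod ks) A B z0 us T) = proj_vec i zd" if "i < length ks" for i
      using reach[OF that] by (simp add: traj_proj[OF that] proj_us[OF that])
  qed
  then show "\<exists>us\<in>controls (Zprod ks) m. traj (Zprod ks) A B z0 us T = zd"
    using us by blast
qed

lemma controllable_Zprod_iff:
  assumes pos: "\<forall>k\<in>set ks. 0 < k" and "length A = n" and "length B = n"
  shows "controllable (Zprod ks) n m A B \<longleftrightarrow>
    (\<forall>i<length ks. controllable (Zmod (ks ! i)) n m (proj_mat i A) (proj_mat i B))"
proof
  assume "controllable (Zprod ks) n m A B"
  then show "\<forall>i<length ks. controllable (Zmod (ks ! i)) n m (proj_mat i A) (proj_mat i B)"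
    using pos controllable_component_if_Zprod by blast
next
  assume "\<forall>i<length ks. controllable (Zmod (ks ! i)) n m (proj_mat i A) (proj_mat i B)"
  then have "\<forall>i<length ks. \<exists>K. \<forall>T\<ge>K.
      controllable_in_time (Zmod (ks ! i)) n m (proj_mat i A) (proj_mat i B) T"
    using pos assms(2,3) nth_mem
    by (auto intro!: Zmod_controllable_eventually_in_time simp: proj_mat_def)
  then obtain K where K: "\<And>i T. i < length ks \<Longrightarrow> K i \<le> T \<Longrightarrow>
      controllable_in_time (Zmod (ks ! i)) n m (proj_mat i A) (proj_mat i B) T"
    by metis
  have "controllable_in_time (Zprod ks) n m A B (\<Sum>i<length ks. K i)"
    using pos assms(2,3) by (intro controllable_in_time_Zprod K) (auto intro: member_le_sum)
  then show "controllable (Zprod ks) n m A B"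
    by (rule controllable_if_in_time)
qed

lemma observable_component_if_Zprod:
  assumes pos: "\<forall>k\<in>set ks. 0 < k" and i: "i < length ks"
    and obs: "observable (Zprod ks) n m A B C"
  shows "observable (Zmod (ks ! i)) n m (proj_mat i A) (proj_mat i B) (proj_mat i C)"
  unfolding observable_def
proof (intro ballI impI)
  fix x0 x1 assume x0: "x0 \<in> vecs (Zmod (ks ! i)) n" and x1: "x1 \<in> vecs (Zmod (ks ! i)) n"
    and "x0 \<noteq> x1"
  then have "embed_vec ks i x0 \<noteq> embed_vec ks i x1"
    using proj_embed_vec[OF i] by metis
  then obtain us t where us: "us \<in> controls (Zprod ks) m"
    and differ: "net_output (Zprod ks) A B C (embed_vec ks i x0) us t
      \<noteq> net_output (Zprod ks) A B C (embed_vec ks i x1) us t"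
    using obs embed_vec_in_vecs[OF pos x0] embed_vec_in_vecs[OF pos x1]
    unfolding observable_def by blast
  let ?out = "\<lambda>x. net_output (Zprod ks) A B C (embed_vec ks i x) us t"
  have "length x0 = length x1"
    using x0 x1 by (simp add: vecs_def)
  have "proj_vec i (?out x0) \<noteq> proj_vec i (?out x1)"
  proof
    assume "proj_vec i (?out x0) = proj_vec i (?out x1)"
    \<comment> \<open>the other components start from the zero state in both cases\<close>
    then have "proj_vec j (?out x0) = proj_vec j (?out x1)" if "j < length ks" for j
      using that \<open>length x0 = length x1\<close>
      by (cases "j = i") (simp_all add: net_output_proj proj_embed_vec)
    moreover have "?out x \<in> vecs (Zprod ks) (length C)" for x
      using Zprod_ad_in_car[OF pos] Zprod_ze_in_car[OF pos]
      by (simp add: net_output_def mat_vec_in_vecs)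
    ultimately have "?out x0 = ?out x1"
      by (intro Zprod_vecs_eqI)
    with differ show False
      by contradiction
  qed
  then show "\<exists>us\<in>controls (Zmod (ks ! i)) m. \<exists>t.
      net_output (Zmod (ks ! i)) (proj_mat i A) (proj_mat i B) (proj_mat i C) x0 us t
      \<noteq> net_output (Zmod (ks ! i)) (proj_mat i A) (proj_mat i B) (proj_mat i C) x1 us t"
    using proj_controls[OF i us] by (auto simp: net_output_proj[OF i] proj_embed_vec[OF i])
qed

lemma observable_Zprod_if_components:
  assumes pos: "\<forall>k\<in>set ks. 0 < k"
    and components: "\<And>i. i < length ks \<Longrightarrow>
      observable (Zmod (ks ! i)) n m (proj_mat i A) (proj_mat i B) (proj_mat i C)"
  shows "observable (Zprod ks) n m A B C"
  unfolding observable_def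
proof (intro ballI impI)
  fix x0 x1 assume x0: "x0 \<in> vecs (Zprod ks) n" and x1: "x1 \<in> vecs (Zprod ks) n"
    and "x0 \<noteq> x1"
  then obtain i where i: "i < length ks" and "proj_vec i x0 \<noteq> proj_vec i x1"
    using Zprod_vecs_eqI by blast
  then obtain us t where us: "us \<in> controls (Zmod (ks ! i)) m"
    and "net_output (Zmod (ks ! i)) (proj_mat i A) (proj_mat i B) (proj_mat i C) (proj_vec i x0) us t
      \<noteq> net_output (Zmod (ks ! i)) (proj_mat i A) (proj_mat i B) (proj_mat i C) (proj_vec i x1) us t"
    using components[OF i] proj_vec_in_vecs[OF i x0] proj_vec_in_vecs[OF i x1]
    unfolding observable_def by blast
  moreover have "(\<lambda>t. proj_vec i (embed_vec ks i (us t))) = us"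
    by (simp add: proj_embed_vec[OF i])
  ultimately have "proj_vec i (net_output (Zprod ks) A B C x0 (\<lambda>t. embed_vec ks i (us t)) t)
      \<noteq> proj_vec i (net_output (Zprod ks) A B C x1 (\<lambda>t. embed_vec ks i (us t)) t)"
    by (simp add: net_output_proj[OF i])
  then show "\<exists>us\<in>controls (Zprod ks) m. \<exists>t.
      net_output (Zprod ks) A B C x0 us t \<noteq> net_output (Zprod ks) A B C x1 us t"
    using embed_controls[OF pos us] by metis
qed

theorem proposition9p2:
  fixes ks :: "nat list" and n m p :: nat
    and A B C :: "(nat \<Rightarrow> int) list list"
  assumes "ks \<noteq> []" and "sorted ks" and "\<forall>k\<in>set ks. prime k"
    and "is_mat (Zprod ks) n n A" and "is_mat (Zprod ks) n m B" and "is_mat (Zprod ks) p n C"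
  shows "is_product ks n m A B
    \<and> (controllable (Zprod ks) n m A B \<longleftrightarrow>
           (\<forall>i<length ks. controllable (Zmod (ks ! i)) n m (proj_mat i A) (proj_mat i B)))
    \<and> (observable (Zprod ks) n m A B C \<longleftrightarrow>
           (\<forall>i<length ks. observable (Zmod (ks ! i)) n m (proj_mat i A) (proj_mat i B) (proj_mat i C)))"
proof -
  \<comment> \<open>of the hypotheses on ks only the positivity of the moduli is used\<close>
  have pos: "\<forall>k\<in>set ks. 0 < k"
    using assms(3) by (simp add: prime_gt_0_nat)
  have "length A = n" and "length B = n"
    using assms(4,5) by (simp_all add: is_mat_def)
  moreover have "observable (Zprod ks) n m A B C \<longleftrightarrow>
      (\<forall>i<length ks. observable (Zmod (ks ! i)) n m (proj_mat i A) (proj_mat i B) (proj_mat i C))"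
    using observable_component_if_Zprod[OF pos] observable_Zprod_if_components[OF pos] by blast
  ultimately show ?thesis
    by (simp add: is_product_Zprod controllable_Zprod_iff[OF pos])
qed

end
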